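(* For every pair of positive integers $(m,n)$ there exists a nonzero bounded big Hankel operator $\Gamma:H^2(\mathbb T^2)\to H^2(\mathbb T^2)^\perp$ of finite type $(m,n)$ such that $\sigma_{pq}(\Gamma)=0$ for all $p>m$ and $q>n$.
   Context: $H^2(\mathbb T^2)$ is the subspace of $L^2(\mathbb T^2)$ of functions with Fourier coefficients supported in $\{m,n\ge0\}$, and $P$ is its orthogonal projection. A big Hankel operator is an operator of the form $\Gamma_\phi f=(I-P)(\phi f)$ with $\phi\in L^2(\mathbb T^2)$. A closed subspace $\mathcal I\subset H^2(\mathbb T^2)$ has finite bi-codimension $(m,n)$ if $\mathcal I=V_1\otimes V_2$ (closed span of products $f(x)g(y)$) with $V_1,V_2\subset H^2(\mathbb T)$ closed of codimensions $m$ and $n$. A bounded Hankel operator is of finite type $(m,n)$ if its kernel has finite bi-codimension $(m,n)$. For a bounded Hankel operator $\Gamma$ and integers $p,q\ge0$, $$\sigma_{pq}(\Gamma)=\inf\{\|\Gamma|_{\mathcal I}\|\},$$ where the infimum runs over closed subspaces $\mathcal I\subset H^2(\mathbb T^2)$ invariant under multiplication by $e^{ix}$ and by $e^{iy}$ that have finite bi-codimension at most $(p,q)$. Equivalently, these are the subspaces $\mathcal I=b_1(x)b_2(y)H^2(\mathbb T^2)$ with $b_1$, $b_2$ finite Blaschke products having at most $p$ and $q$ factors, respectively. *)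

theory Defs
  imports "HOL-Analysis.Analysis"
begin

text \<open>Functions on the torus are represented by their Fourier coefficients
  (Parseval: L2 is isometric to l2 of the coefficients).\<close>

definition l2 :: "('a \<Rightarrow> complex) \<Rightarrow> bool" where
  "l2 f \<longleftrightarrow> (\<lambda>k. (cmod (f k))\<^sup>2) summable_on UNIV"

definition l2norm :: "('a \<Rightarrow> complex) \<Rightarrow> real" where
  "l2norm f = sqrt (\<Sum>\<^sub>\<infinity>k. (cmod (f k))\<^sup>2)"

definition l2inner :: "('a \<Rightarrow> complex) \<Rightarrow> ('a \<Rightarrow> complex) \<Rightarrow> complex" where
  "l2inner f g = (\<Sum>\<^sub>\<infinity>k. f k * cnj (g k))"

definition H2_1 :: "(int \<Rightarrow> complex) set" where
  "H2_1 = {f. l2 f \<and> (\<forall>k<0. f k = 0)}"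

definition H2_2 :: "(int \<times> int \<Rightarrow> complex) set" where
  "H2_2 = {f. l2 f \<and> (\<forall>a b. (a < 0 \<or> b < 0) \<longrightarrow> f (a, b) = 0)}"

text \<open>Fourier coefficients of the product phi * f (convolution).\<close>
definition conv2 :: "(int \<times> int \<Rightarrow> complex) \<Rightarrow> (int \<times> int \<Rightarrow> complex) \<Rightarrow> (int \<times> int \<Rightarrow> complex)" where
  "conv2 \<phi> f = (\<lambda>(a, b). \<Sum>\<^sub>\<infinity>(c, d). \<phi> (a - c, b - d) * f (c, d))"

text \<open>Big Hankel operator Gamma_phi f = (I - P)(phi f).\<close>
definition hankel :: "(int \<times> int \<Rightarrow> complex) \<Rightarrow> (int \<times> int \<Rightarrow> complex) \<Rightarrow> (int \<times> int \<Rightarrow> complex)" where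
  "hankel \<phi> f = (\<lambda>(a, b). if a \<ge> 0 \<and> b \<ge> 0 then 0 else conv2 \<phi> f (a, b))"

definition bounded_op :: "((int \<times> int \<Rightarrow> complex) \<Rightarrow> (int \<times> int \<Rightarrow> complex)) \<Rightarrow> bool" where
  "bounded_op T \<longleftrightarrow> (\<exists>C. \<forall>f\<in>H2_2. l2 (T f) \<and> l2norm (T f) \<le> C * l2norm f)"

definition op_kernel :: "((int \<times> int \<Rightarrow> complex) \<Rightarrow> (int \<times> int \<Rightarrow> complex)) \<Rightarrow> (int \<times> int \<Rightarrow> complex) set" where
  "op_kernel T = {f \<in> H2_2. T f = (\<lambda>_. 0)}"

text \<open>A closed subspace V of H2(T) has codimension m: it is the orthogonal
  complement (in H2(T)) of an m-dimensional subspace, spanned by an orthonormal family.\<close>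
definition has_codim :: "(int \<Rightarrow> complex) set \<Rightarrow> nat \<Rightarrow> bool" where
  "has_codim V m \<longleftrightarrow> (\<exists>e :: nat \<Rightarrow> int \<Rightarrow> complex.
      (\<forall>i<m. e i \<in> H2_1) \<and>
      (\<forall>i<m. \<forall>j<m. l2inner (e i) (e j) = (if i = j then 1 else 0)) \<and>
      V = {f \<in> H2_1. \<forall>i<m. l2inner f (e i) = 0})"

text \<open>Closed span (in l2) of the products f(x) g(y), f in V1, g in V2.\<close>
definition tensor_sp :: "(int \<Rightarrow> complex) set \<Rightarrow> (int \<Rightarrow> complex) set \<Rightarrow> (int \<times> int \<Rightarrow> complex) set" where
  "tensor_sp V1 V2 = {h. l2 h \<and> (\<forall>\<epsilon>>0. \<exists>N (c :: nat \<Rightarrow> complex) (f :: nat \<Rightarrow> int \<Rightarrow> complex) (g :: nat \<Rightarrow> int \<Rightarrow> complex).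
      (\<forall>i<N. f i \<in> V1 \<and> g i \<in> V2) \<and>
      l2norm (\<lambda>(a, b). h (a, b) - (\<Sum>i<N. c i * f i a * g i b)) < \<epsilon>)}"

definition has_bicodim :: "(int \<times> int \<Rightarrow> complex) set \<Rightarrow> nat \<Rightarrow> nat \<Rightarrow> bool" where
  "has_bicodim I m n \<longleftrightarrow> (\<exists>V1 V2. has_codim V1 m \<and> has_codim V2 n \<and> I = tensor_sp V1 V2)"

definition finite_type :: "((int \<times> int \<Rightarrow> complex) \<Rightarrow> (int \<times> int \<Rightarrow> complex)) \<Rightarrow> nat \<Rightarrow> nat \<Rightarrow> bool" where
  "finite_type T m n \<longleftrightarrow> bounded_op T \<and> has_bicodim (op_kernel T) m n"

text \<open>Multiplication by e^{ix} and e^{iy}: shifts of Fourier coefficients.\<close>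
definition shift_x :: "(int \<times> int \<Rightarrow> complex) \<Rightarrow> (int \<times> int \<Rightarrow> complex)" where
  "shift_x f = (\<lambda>(a, b). f (a - 1, b))"

definition shift_y :: "(int \<times> int \<Rightarrow> complex) \<Rightarrow> (int \<times> int \<Rightarrow> complex)" where
  "shift_y f = (\<lambda>(a, b). f (a, b - 1))"

definition shift_invariant :: "(int \<times> int \<Rightarrow> complex) set \<Rightarrow> bool" where
  "shift_invariant I \<longleftrightarrow> (\<forall>f\<in>I. shift_x f \<in> I \<and> shift_y f \<in> I)"

definition restr_norm :: "((int \<times> int \<Rightarrow> complex) \<Rightarrow> (int \<times> int \<Rightarrow> complex)) \<Rightarrow> (int \<times> int \<Rightarrow> complex) set \<Rightarrow> real" where
  "restr_norm T I = Sup {l2norm (T f) | f. f \<in> I \<and> l2norm f \<le> 1}"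

definition sigma :: "nat \<Rightarrow> nat \<Rightarrow> ((int \<times> int \<Rightarrow> complex) \<Rightarrow> (int \<times> int \<Rightarrow> complex)) \<Rightarrow> real" where
  "sigma p q T = Inf {restr_norm T I | I. I \<subseteq> H2_2 \<and> shift_invariant I \<and>
      (\<exists>p' q'. p' \<le> p \<and> q' \<le> q \<and> has_bicodim I p' q')}"

end

theory Submission
  imports Defs
begin

text \<open>Take the symbol \<open>\<phi> = z\<^sup>-\<^sup>m w\<^sup>-\<^sup>n\<close>, whose only Fourier coefficient sits at
  \<open>(-m, -n)\<close>. Then \<open>\<Gamma>\<^sub>\<phi>\<close> shifts the Fourier coefficients
  of \<open>f\<close> by \<open>(-m, -n)\<close> and keeps those that leave the positive quadrant, so it is a
  contraction whose kernel is \<open>z\<^sup>m w\<^sup>n H\<^sup>2(\<bbbT>\<^sup>2) = z\<^sup>m H\<^sup>2(\<bbbT>) \<otimes> w\<^sup>n H\<^sup>2(\<bbbT>)\<close>,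
  a shift-invariant subspace of bi-codimension \<open>(m, n)\<close>. Restricted to its own kernel the
  operator has norm \<open>0\<close>, hence \<open>\<sigma>\<^sub>p\<^sub>q(\<Gamma>\<^sub>\<phi>) = 0\<close> as soon as \<open>p \<ge> m\<close> and \<open>q \<ge> n\<close>.\<close>

lemma l2_finite_support:
  assumes "finite S" "\<And>x. x \<notin> S \<Longrightarrow> f x = 0"
  shows "l2 f"
proof -
  have "(\<lambda>k. (cmod (f k))\<^sup>2) summable_on S"
    using assms(1) by simp
  also have "?this \<longleftrightarrow> (\<lambda>k. (cmod (f k))\<^sup>2) summable_on UNIV"
    by (rule summable_on_cong_neutral) (use assms in auto)
  finally show ?thesis
    unfolding l2_def .
qed

lemma l2_indicator: "l2 (indicator {j} :: 'a \<Rightarrow> complex)"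
  by (rule l2_finite_support[of "{j}"]) auto

lemma l2_zero: "l2 (\<lambda>_. 0)"
  by (simp add: l2_def)

lemma l2norm_nonneg: "0 \<le> l2norm f"
  unfolding l2norm_def by (simp add: infsum_nonneg)

lemma l2_dominated:
  assumes "l2 f" "\<And>k. cmod (g k) \<le> cmod (f k)"
  shows "l2 g" "l2norm g \<le> l2norm f"
proof -
  have pointwise: "(cmod (g k))\<^sup>2 \<le> (cmod (f k))\<^sup>2" for k
    using assms(2) by (simp add: power_mono)
  show "l2 g"
    using assms(1) pointwise unfolding l2_def by (rule summable_on_comparison_test) auto
  then show "l2norm g \<le> l2norm f"
    using assms(1) pointwise unfolding l2_def l2norm_def by (simp add: infsum_mono)
qed

lemma l2_add:
  assumes "l2 f" "l2 g"
  shows "l2 (\<lambda>k. f k + g k)"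
proof -
  have "(\<lambda>k. 2 * (cmod (f k))\<^sup>2 + 2 * (cmod (g k))\<^sup>2) summable_on UNIV"
    using assms unfolding l2_def by (intro summable_on_add summable_on_cmult_right)
  moreover have "(cmod (f k + g k))\<^sup>2 \<le> 2 * (cmod (f k))\<^sup>2 + 2 * (cmod (g k))\<^sup>2" for k
  proof -
    have "(cmod (f k + g k))\<^sup>2 \<le> (cmod (f k) + cmod (g k))\<^sup>2"
      by (simp add: norm_triangle_ineq power_mono)
    also have "\<dots> \<le> 2 * (cmod (f k))\<^sup>2 + 2 * (cmod (g k))\<^sup>2"
      using sum_squares_bound[of "cmod (f k)" "cmod (g k)"] by (simp add: power2_sum)
    finally show ?thesis .
  qed
  ultimately show ?thesis
    unfolding l2_def by (rule summable_on_comparison_test) auto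
qed

lemma l2_diff:
  assumes "l2 f" "l2 g"
  shows "l2 (\<lambda>k. f k - g k)"
  using l2_add[of f "\<lambda>k. - g k"] assms by (simp add: l2_def)

lemma l2_sum:
  assumes "finite A" "\<And>i. i \<in> A \<Longrightarrow> l2 (F i)"
  shows "l2 (\<lambda>k. \<Sum>i\<in>A. F i k)"
  using assms
proof (induction A rule: finite_induct)
  case empty
  then show ?case
    by (simp add: l2_zero)
next
  case (insert x A)
  then show ?case
    using l2_add[of "F x" "\<lambda>k. \<Sum>i\<in>A. F i k"] by simp
qed

lemma l2_tensor_product:
  assumes "l2 f" "l2 g"
  shows "l2 (\<lambda>(a, b). c * f a * g b)"
proof -
  obtain G where G: "((\<lambda>b. (cmod (g b))\<^sup>2) has_sum G) UNIV"
    using assms(2) unfolding l2_def summable_on_def by blast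
  have "(\<lambda>(a, b). (cmod c)\<^sup>2 * (cmod (f a))\<^sup>2 * (cmod (g b))\<^sup>2) summable_on UNIV \<times> UNIV"
  proof (rule summable_on_SigmaI[where g = "\<lambda>a. (cmod c)\<^sup>2 * (cmod (f a))\<^sup>2 * G"])
    show "((\<lambda>b. case (a, b) of (a, b) \<Rightarrow> (cmod c)\<^sup>2 * (cmod (f a))\<^sup>2 * (cmod (g b))\<^sup>2)
            has_sum (cmod c)\<^sup>2 * (cmod (f a))\<^sup>2 * G) UNIV" for a
      using has_sum_cmult_right[OF G, of "(cmod c)\<^sup>2 * (cmod (f a))\<^sup>2"] by simp
    show "(\<lambda>a. (cmod c)\<^sup>2 * (cmod (f a))\<^sup>2 * G) summable_on UNIV"
      using assms(1) unfolding l2_def by (intro summable_on_cmult_left summable_on_cmult_right)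
  qed auto
  then show ?thesis
    unfolding l2_def case_prod_unfold by (simp add: norm_mult power_mult_distrib)
qed

lemma l2_reindex:
  assumes "bij \<sigma>"
  shows "l2 (\<lambda>k. f (\<sigma> k)) \<longleftrightarrow> l2 f" "l2norm (\<lambda>k. f (\<sigma> k)) = l2norm f"
  unfolding l2_def l2norm_def
  using summable_on_reindex_bij_betw[OF assms] infsum_reindex_bij_betw[OF assms] by simp_all

lemma norm_le_l2norm:
  assumes "l2 f"
  shows "cmod (f k) \<le> l2norm f"
proof -
  have "(\<Sum>k\<in>{k}. (cmod (f k))\<^sup>2) \<le> (\<Sum>\<^sub>\<infinity>k. (cmod (f k))\<^sup>2)"
    using assms unfolding l2_def by (intro finite_sum_le_infsum) auto
  then show ?thesis
    unfolding l2norm_def by (simp add: real_le_rsqrt)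
qed

lemma l2norm_tail_less:
  assumes "l2 h" "e > 0"
  obtains F where "finite F" "l2norm (\<lambda>k. if k \<in> F then 0 else h k) < e"
proof -
  let ?g = "\<lambda>k. (cmod (h k))\<^sup>2"
  have summable: "?g summable_on UNIV"
    using assms(1) by (simp add: l2_def)
  obtain F where F: "finite F" "dist (sum ?g F) (infsum ?g UNIV) \<le> e\<^sup>2 / 2"
    using infsum_finite_approximation[OF summable, of "e\<^sup>2 / 2"] assms(2) by auto
  have "(\<Sum>\<^sub>\<infinity>k. (cmod (if k \<in> F then 0 else h k))\<^sup>2) = infsum ?g (UNIV - F)"
    by (rule infsum_cong_neutral) auto
  also have "\<dots> = infsum ?g UNIV - sum ?g F"
    using infsum_Un_disjoint[of ?g F "UNIV - F"] summable_on_subset_banach[OF summable] F(1)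
    by (simp add: Un_absorb1)
  also have "\<dots> \<le> e\<^sup>2 / 2"
    using F(2) unfolding dist_real_def by linarith
  also have "\<dots> < e\<^sup>2"
    using assms(2) by simp
  finally have "l2norm (\<lambda>k. if k \<in> F then 0 else h k) < sqrt (e\<^sup>2)"
    unfolding l2norm_def by (rule real_sqrt_less_mono)
  with F(1) assms(2) show ?thesis
    using that by simp
qed

lemma zero_in_tensor_sp: "(\<lambda>_. 0) \<in> tensor_sp V1 V2"
  unfolding tensor_sp_def
  by (auto simp: l2_zero l2norm_def intro!: exI[of _ 0])

lemma tensor_sp_vanishing:
  assumes "h \<in> tensor_sp V1 V2" "V1 \<subseteq> Collect l2" "V2 \<subseteq> Collect l2"
    and "(\<forall>f\<in>V1. f a = 0) \<or> (\<forall>g\<in>V2. g b = 0)"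
  shows "h (a, b) = 0"
proof (rule ccontr)
  assume "h (a, b) \<noteq> 0"
  then obtain N c and f g :: "nat \<Rightarrow> int \<Rightarrow> complex"
    where fg: "\<forall>i<N. f i \<in> V1 \<and> g i \<in> V2"
      and close: "l2norm (\<lambda>(a, b). h (a, b) - (\<Sum>i<N. c i * f i a * g i b)) < cmod (h (a, b))"
    using assms(1) unfolding tensor_sp_def by (auto dest!: zero_less_norm_iff[THEN iffD2])
  let ?d = "\<lambda>(a, b). h (a, b) - (\<Sum>i<N. c i * f i a * g i b)"
  have "l2 (\<lambda>k. \<Sum>i<N. (\<lambda>(a, b). c i * f i a * g i b) k)"
    using fg assms(2,3) by (intro l2_sum l2_tensor_product) auto
  then have "l2 ?d"
    using l2_diff[of h] assms(1) unfolding tensor_sp_def by (simp add: case_prod_unfold)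
  moreover have "?d (a, b) = h (a, b)"
    using fg assms(4) by (auto intro!: sum.neutral)
  ultimately show False
    using norm_le_l2norm[of ?d "(a, b)"] close by simp
qed

lemma finite_restriction_as_tensor_sum:
  fixes h :: "int \<times> int \<Rightarrow> complex"
  assumes "finite S"
  obtains N and f g :: "nat \<Rightarrow> int \<Rightarrow> complex" and c :: "nat \<Rightarrow> complex"
  where "\<forall>i<N. \<exists>k\<in>S. f i = indicator {fst k} \<and> g i = indicator {snd k}"
    and "\<And>a b. (\<Sum>i<N. c i * f i a * g i b) = (if (a, b) \<in> S then h (a, b) else 0)"
proof -
  obtain \<kappa> where \<kappa>: "bij_betw \<kappa> {..<card S} S"
    using ex_bij_betw_nat_finite[OF assms] by (auto simp: lessThan_atLeast0)
  have "\<forall>i<card S. \<exists>k\<in>S. indicator {fst (\<kappa> i)} = indicator {fst k} \<and>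
                    indicator {snd (\<kappa> i)} = indicator {snd k}"
    using bij_betw_apply[OF \<kappa>] by blast
  moreover have "(\<Sum>i<card S. h (\<kappa> i) * indicator {fst (\<kappa> i)} a * indicator {snd (\<kappa> i)} b)
        = (if (a, b) \<in> S then h (a, b) else 0)" for a b
  proof -
    have "(\<Sum>i<card S. h (\<kappa> i) * indicator {fst (\<kappa> i)} a * indicator {snd (\<kappa> i)} b)
          = (\<Sum>k\<in>S. h k * indicator {fst k} a * indicator {snd k} b)"
      by (rule sum.reindex_bij_betw[OF \<kappa>])
    also have "\<dots> = (\<Sum>k\<in>S. if k = (a, b) then h k else 0)"
      by (rule sum.cong) (auto simp: indicator_def)
    finally show ?thesis
      using assms by simp
  qed
  ultimately show ?thesis
    by (rule that)
qed

lemma tensor_sp_memberI: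
  fixes V1 V2 :: "(int \<Rightarrow> complex) set"
  assumes "l2 h" and "\<And>a b. h (a, b) \<noteq> 0 \<Longrightarrow> indicator {a} \<in> V1 \<and> indicator {b} \<in> V2"
  shows "h \<in> tensor_sp V1 V2"
  unfolding tensor_sp_def
proof (intro CollectI conjI allI impI assms(1))
  fix e :: real
  assume "e > 0"
  then obtain F where F: "finite F" "l2norm (\<lambda>k. if k \<in> F then 0 else h k) < e"
    using l2norm_tail_less[OF assms(1)] by blast
  define S where "S = {k \<in> F. h k \<noteq> 0}"
  have "finite S"
    using F(1) by (simp add: S_def)
  then obtain N and f g :: "nat \<Rightarrow> int \<Rightarrow> complex" and c
    where fg: "\<forall>i<N. \<exists>k\<in>S. f i = indicator {fst k} \<and> g i = indicator {snd k}"
      and sums: "\<And>a b. (\<Sum>i<N. c i * f i a * g i b) = (if (a, b) \<in> S then h (a, b) else 0)"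
    using finite_restriction_as_tensor_sum[where h = h] by blast
  have "\<forall>i<N. f i \<in> V1 \<and> g i \<in> V2"
    using fg assms(2) by (fastforce simp: S_def)
  moreover have "(\<lambda>(a, b). h (a, b) - (\<Sum>i<N. c i * f i a * g i b)) = (\<lambda>k. if k \<in> F then 0 else h k)"
    by (auto simp: sums S_def)
  ultimately show "\<exists>(N :: nat) c f g. (\<forall>i<N. f i \<in> V1 \<and> g i \<in> V2) \<and>
      l2norm (\<lambda>(a, b). h (a, b) - (\<Sum>i<N. c i * f i a * g i b)) < e"
    using F(2) by (intro exI[of _ N] exI[of _ c] exI[of _ f] exI[of _ g]) simp
qed

definition shifted_H2_1 :: "nat \<Rightarrow> (int \<Rightarrow> complex) set" where
  "shifted_H2_1 m = {f \<in> H2_1. \<forall>k < int m. f k = 0}"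

definition shifted_H2_2 :: "nat \<Rightarrow> nat \<Rightarrow> (int \<times> int \<Rightarrow> complex) set" where
  "shifted_H2_2 m n = {h. l2 h \<and> (\<forall>a b. a < int m \<or> b < int n \<longrightarrow> h (a, b) = 0)}"

lemma indicator_in_shifted_H2_1: "int m \<le> j \<Longrightarrow> indicator {j} \<in> shifted_H2_1 m"
  by (auto simp: shifted_H2_1_def H2_1_def l2_indicator)

lemma l2inner_indicator: "l2inner f (indicator {j}) = f j"
proof -
  have "l2inner f (indicator {j}) = (\<Sum>\<^sub>\<infinity>k\<in>{j}. f k * cnj (indicator {j} k))"
    unfolding l2inner_def by (rule infsum_cong_neutral) auto
  then show ?thesis
    by simp
qed

lemma has_codim_shifted_H2_1: "has_codim (shifted_H2_1 m) m"
  unfolding has_codim_def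
proof (intro exI[of _ "\<lambda>i. indicator {int i}"] conjI allI impI)
  show "indicator {int i} \<in> H2_1" for i
    using indicator_in_shifted_H2_1[of 0] by (simp add: shifted_H2_1_def)
  show "l2inner (indicator {int i}) (indicator {int j}) = (if i = j then 1 else 0)" for i j
    by (simp add: l2inner_indicator)
  have "(\<forall>k < int m. f k = 0) \<longleftrightarrow> (\<forall>i<m. f (int i) = 0)" if "f \<in> H2_1" for f
  proof
    assume nonneg: "\<forall>i<m. f (int i) = 0"
    show "\<forall>k < int m. f k = 0"
    proof (intro allI impI)
      fix k
      assume "k < int m"
      show "f k = 0"
      proof (cases "k < 0")
        case True
        then show ?thesis
          using \<open>f \<in> H2_1\<close> by (simp add: H2_1_def)
      next
        case False
        then show ?thesis
          using nonneg[rule_format, of "nat k"] \<open>k < int m\<close> by simp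
      qed
    qed
  qed simp
  then show "shifted_H2_1 m = {f \<in> H2_1. \<forall>i<m. l2inner f (indicator {int i}) = 0}"
    unfolding shifted_H2_1_def l2inner_indicator by blast
qed

lemma tensor_sp_shifted_H2_1: "tensor_sp (shifted_H2_1 m) (shifted_H2_1 n) = shifted_H2_2 m n"
proof
  have l2: "shifted_H2_1 k \<subseteq> Collect l2" for k
    by (auto simp: shifted_H2_1_def H2_1_def)
  show "tensor_sp (shifted_H2_1 m) (shifted_H2_1 n) \<subseteq> shifted_H2_2 m n"
  proof
    fix h
    assume h: "h \<in> tensor_sp (shifted_H2_1 m) (shifted_H2_1 n)"
    have "h (a, b) = 0" if "a < int m \<or> b < int n" for a b
      using tensor_sp_vanishing[OF h l2 l2] that by (auto simp: shifted_H2_1_def)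
    with h show "h \<in> shifted_H2_2 m n"
      by (simp add: shifted_H2_2_def tensor_sp_def)
  qed
  show "shifted_H2_2 m n \<subseteq> tensor_sp (shifted_H2_1 m) (shifted_H2_1 n)"
    unfolding shifted_H2_2_def
    by (auto intro!: tensor_sp_memberI indicator_in_shifted_H2_1) (meson not_le)+
qed

lemma has_bicodim_shifted_H2_2: "has_bicodim (shifted_H2_2 m n) m n"
  unfolding has_bicodim_def
  using has_codim_shifted_H2_1 tensor_sp_shifted_H2_1 by metis

lemma shift_invariant_shifted_H2_2: "shift_invariant (shifted_H2_2 m n)"
proof -
  have "bij (\<lambda>(a :: int, b :: int). (a - 1, b))"
    by (rule bij_betw_byWitness[where f' = "\<lambda>(a, b). (a + 1, b)"]) auto
  moreover have "bij (\<lambda>(a :: int, b :: int). (a, b - 1))"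
    by (rule bij_betw_byWitness[where f' = "\<lambda>(a, b). (a, b + 1)"]) auto
  ultimately have "l2 (shift_x f) \<and> l2 (shift_y f)" if "l2 f" for f
    using that l2_reindex(1)[of "\<lambda>(a, b). (a - 1, b)" f] l2_reindex(1)[of "\<lambda>(a, b). (a, b - 1)" f]
    by (simp add: shift_x_def shift_y_def case_prod_unfold)
  then show ?thesis
    unfolding shift_invariant_def shifted_H2_2_def shift_x_def shift_y_def by auto
qed

lemma restr_norm_nonneg:
  assumes "bounded_op T" "I \<subseteq> H2_2" "(\<lambda>_. 0) \<in> I"
  shows "0 \<le> restr_norm T I"
proof -
  \<comment> \<open>boundedness is needed: the supremum of a set of reals unbounded above is unspecified\<close>
  obtain C where C: "\<And>f. f \<in> H2_2 \<Longrightarrow> l2norm (T f) \<le> C * l2norm f"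
    using assms(1) unfolding bounded_op_def by blast
  let ?X = "{l2norm (T f) | f. f \<in> I \<and> l2norm f \<le> 1}"
  have bound: "l2norm (T f) \<le> max C 0" if "f \<in> I" "l2norm f \<le> 1" for f
  proof -
    have "l2norm (T f) \<le> C * l2norm f"
      using C that(1) assms(2) by blast
    also have "\<dots> \<le> max C 0 * l2norm f"
      by (simp add: mult_right_mono l2norm_nonneg)
    also have "\<dots> \<le> max C 0"
      using that(2) by (simp add: mult_left_le)
    finally show ?thesis .
  qed
  have "l2norm (T (\<lambda>_. 0)) \<in> ?X"
    using assms(3) by (auto simp: l2norm_def)
  moreover have "bdd_above ?X"
    using bound by (intro bdd_aboveI[of _ "max C 0"]) blast
  ultimately have "l2norm (T (\<lambda>_. 0)) \<le> restr_norm T I"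
    unfolding restr_norm_def by (rule cSup_upper[of _ ?X])
  then show ?thesis
    using l2norm_nonneg[of "T (\<lambda>_. 0)"] by linarith
qed

lemma restr_norm_op_kernel:
  assumes "(\<lambda>_. 0) \<in> op_kernel T"
  shows "restr_norm T (op_kernel T) = 0"
proof -
  have "{l2norm (T f) | f. f \<in> op_kernel T \<and> l2norm f \<le> 1} = {0}"
    using assms by (auto simp: op_kernel_def l2norm_def intro!: exI[of _ "\<lambda>_. 0"])
  then show ?thesis
    by (simp add: restr_norm_def)
qed

lemma sigma_eq_0_if_shift_invariant_kernel:
  assumes "finite_type T m n" "shift_invariant (op_kernel T)" "m \<le> p" "n \<le> q"
  shows "sigma p q T = 0"
proof -
  let ?S = "{restr_norm T I | I. I \<subseteq> H2_2 \<and> shift_invariant I \<and>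
              (\<exists>p' q'. p' \<le> p \<and> q' \<le> q \<and> has_bicodim I p' q')}"
  have zero_in: "(\<lambda>_. 0) \<in> I" if "has_bicodim I p' q'" for I p' q'
    using that by (auto simp: has_bicodim_def zero_in_tensor_sp)
  have kernel: "op_kernel T \<subseteq> H2_2" "has_bicodim (op_kernel T) m n" and "bounded_op T"
    using assms(1) by (auto simp: op_kernel_def finite_type_def)
  have "restr_norm T (op_kernel T) = 0"
    using zero_in[OF kernel(2)] by (rule restr_norm_op_kernel)
  moreover have "restr_norm T (op_kernel T) \<in> ?S"
    using kernel assms(2-4) by (intro CollectI exI[of _ "op_kernel T"]) blast
  moreover have "0 \<le> x" if "x \<in> ?S" for x
  proof -
    obtain I p' q' where "x = restr_norm T I" "I \<subseteq> H2_2" "has_bicodim I p' q'"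
      using \<open>x \<in> ?S\<close> by blast
    then show ?thesis
      using restr_norm_nonneg[OF \<open>bounded_op T\<close> _ zero_in] by simp
  qed
  ultimately show ?thesis
    unfolding sigma_def by (intro cInf_eq_minimum) simp_all
qed

definition conj_monomial :: "nat \<Rightarrow> nat \<Rightarrow> int \<times> int \<Rightarrow> complex" where
  "conj_monomial m n = indicator {(- int m, - int n)}"

lemma conv2_conj_monomial: "conv2 (conj_monomial m n) f (a, b) = f (a + int m, b + int n)"
proof -
  have "conv2 (conj_monomial m n) f (a, b)
        = (\<Sum>\<^sub>\<infinity>(c, d)\<in>{(a + int m, b + int n)}. conj_monomial m n (a - c, b - d) * f (c, d))"
    unfolding conv2_def prod.case by (rule infsum_cong_neutral) (auto simp: conj_monomial_def indicator_def)
  then show ?thesis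
    by (simp add: conj_monomial_def)
qed

lemma hankel_conj_monomial:
  "hankel (conj_monomial m n) f
     = (\<lambda>(a, b). if 0 \<le> a \<and> 0 \<le> b then 0 else f (a + int m, b + int n))"
  by (auto simp: hankel_def conv2_conj_monomial)

lemma bounded_op_hankel_conj_monomial: "bounded_op (hankel (conj_monomial m n))"
  unfolding bounded_op_def
proof (intro exI[of _ 1] ballI)
  fix f
  assume "f \<in> H2_2"
  define \<tau> where "\<tau> = (\<lambda>(a :: int, b :: int). (a + int m, b + int n))"
  have "bij \<tau>"
    unfolding \<tau>_def by (rule bij_betw_byWitness[where f' = "\<lambda>(a, b). (a - int m, b - int n)"]) auto
  then have "l2 (\<lambda>k. f (\<tau> k))" "l2norm (\<lambda>k. f (\<tau> k)) = l2norm f"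
    using \<open>f \<in> H2_2\<close> l2_reindex by (auto simp: H2_2_def)
  moreover have "cmod (hankel (conj_monomial m n) f k) \<le> cmod (f (\<tau> k))" for k
    by (cases k) (simp add: hankel_conj_monomial \<tau>_def)
  ultimately show "l2 (hankel (conj_monomial m n) f) \<and>
                   l2norm (hankel (conj_monomial m n) f) \<le> 1 * l2norm f"
    using l2_dominated[of "\<lambda>k. f (\<tau> k)" "hankel (conj_monomial m n) f"] by simp
qed

lemma op_kernel_hankel_conj_monomial:
  "op_kernel (hankel (conj_monomial m n)) = shifted_H2_2 m n"
proof (intro set_eqI iffI)
  fix f
  assume f: "f \<in> op_kernel (hankel (conj_monomial m n))"
  have shifted: "f (a + int m, b + int n) = 0" if "a < 0 \<or> b < 0" for a b
  proof -
    have "hankel (conj_monomial m n) f (a, b) = 0"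
      using f by (simp add: op_kernel_def)
    then show ?thesis
      using that by (auto simp: hankel_conj_monomial)
  qed
  have "f (a, b) = 0" if "a < int m \<or> b < int n" for a b
    using shifted[of "a - int m" "b - int n"] that by simp
  with f show "f \<in> shifted_H2_2 m n"
    by (simp add: op_kernel_def H2_2_def shifted_H2_2_def)
next
  fix f
  assume f: "f \<in> shifted_H2_2 m n"
  have "hankel (conj_monomial m n) f = (\<lambda>_. 0)"
  proof (rule ext, clarify)
    fix a b :: int
    show "hankel (conj_monomial m n) f (a, b) = 0"
      using f by (auto simp: shifted_H2_2_def hankel_conj_monomial not_le)
  qed
  moreover have "f \<in> H2_2"
    using f by (auto simp: shifted_H2_2_def H2_2_def)
  ultimately show "f \<in> op_kernel (hankel (conj_monomial m n))"
    by (simp add: op_kernel_def)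
qed

lemma hankel_conj_monomial_nonzero:
  assumes "0 < m \<or> 0 < n"
  shows "hankel (conj_monomial m n) (indicator {(0, 0)}) \<noteq> (\<lambda>_. 0)"
proof
  assume "hankel (conj_monomial m n) (indicator {(0, 0)}) = (\<lambda>_. 0)"
  then have "hankel (conj_monomial m n) (indicator {(0, 0)}) (- int m, - int n) = 0"
    by simp
  with assms show False
    by (auto simp: hankel_conj_monomial)
qed

theorem mainTheorem9:
  fixes m n :: nat
  assumes "m > 0" and "n > 0"
  shows "\<exists>\<phi> :: int \<times> int \<Rightarrow> complex. l2 \<phi> \<and>
           (\<exists>f\<in>H2_2. hankel \<phi> f \<noteq> (\<lambda>_. 0)) \<and>
           finite_type (hankel \<phi>) m n \<and>
           (\<forall>p q. m < p \<and> n < q \<longrightarrow> sigma p q (hankel \<phi>) = 0)"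
proof (intro exI[of _ "conj_monomial m n"] conjI allI impI)
  show "l2 (conj_monomial m n)"
    by (simp add: conj_monomial_def l2_indicator)
  have "indicator {(0, 0)} \<in> H2_2"
    by (simp add: H2_2_def l2_indicator)
  then show "\<exists>f\<in>H2_2. hankel (conj_monomial m n) f \<noteq> (\<lambda>_. 0)"
    using hankel_conj_monomial_nonzero assms by blast
  show type: "finite_type (hankel (conj_monomial m n)) m n"
    unfolding finite_type_def op_kernel_hankel_conj_monomial
    using bounded_op_hankel_conj_monomial has_bicodim_shifted_H2_2 by blast
  fix p q
  assume "m < p \<and> n < q"
  then show "sigma p q (hankel (conj_monomial m n)) = 0"
    using sigma_eq_0_if_shift_invariant_kernel[OF type] shift_invariant_shifted_H2_2
    by (simp add: op_kernel_hankel_conj_monomial)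
qed

end
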